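(* Let $b$ be a solvable board position on the 37-hole hexagon board $H_X$. Suppose $b$ is invariant under the $180^\circ$ rotation $(a,b)\mapsto(-a,-b)$, or invariant under at least one diagonal reflection. This covers exactly symmetry types 1, 2, 3, 5, 7, 8 of the hexagon board: - full hexagonal symmetry; - $60^\circ$ rotation; - $120^\circ$ rotation together with a diagonal reflection; - both an orthogonal and the perpendicular diagonal reflection; - $180^\circ$ rotation; - a single diagonal reflection. Then $b$ lies in position class A.
   Context: Use axial coordinates on the triangular lattice. The hexagon board is $H_X=\{(a,c)\in\mathbb{Z}^2: |a|\le3,\ |c|\le3,\ |a+c|\le3\}$, which has 37 holes. The lattice lines are the lines in the three directions $(1,0),(0,1),(1,-1)$. A board position is a subset of $H_X$ (the occupied holes). A jump: given $d\in\{\pm(1,0),\pm(0,1),\pm(1,-1)\}$ and $p$ with $p,p+d,p+2d\in H_X$, $p,p+d$ occupied and $p+2d$ empty, the jump removes the pegs at $p,p+d$ and places a peg at $p+2d$. A position is solvable if some sequence of jumps leads to exactly one peg. The symmetries of $H_X$ form the dihedral group of order 12 of the regular hexagon, about the centre $(0,0)$. A reflection is called orthogonal if its mirror line is parallel to a lattice line. It is called diagonal if its mirror line is perpendicular to a lattice line. Position class A. For $i\in\{0,1,2\}$ let $N_i$ be the number of pegs of $b$ at holes $(a,c)$ with $a-c\equiv i\pmod 3$. The position $b$ lies in position class A if $N_1+N_2$ is even and $N_0+N_2$ and $N_0+N_1$ are odd. This is the position class of a single peg at $(0,0)$. *)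

theory Defs
  imports Main
begin

type_synonym hole = "int \<times> int"
type_synonym position = "hole set"

definition HX :: "hole set" where
  "HX = {(a, c). \<bar>a\<bar> \<le> 3 \<and> \<bar>c\<bar> \<le> 3 \<and> \<bar>a + c\<bar> \<le> 3}"

definition jump_dirs :: "hole set" where
  "jump_dirs = {(1,0), (-1,0), (0,1), (0,-1), (1,-1), (-1,1)}"

definition hadd :: "hole \<Rightarrow> hole \<Rightarrow> hole" where
  "hadd p q = (fst p + fst q, snd p + snd q)"

definition jump :: "position \<Rightarrow> position \<Rightarrow> bool" where
  "jump b b' \<longleftrightarrow> (\<exists>d p. d \<in> jump_dirs \<and>
      p \<in> HX \<and> hadd p d \<in> HX \<and> hadd (hadd p d) d \<in> HX \<and>
      p \<in> b \<and> hadd p d \<in> b \<and> hadd (hadd p d) d \<notin> b \<and>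
      b' = insert (hadd (hadd p d) d) (b - {p, hadd p d}))"

definition solvable :: "position \<Rightarrow> bool" where
  "solvable b \<longleftrightarrow> (\<exists>b'. jump\<^sup>*\<^sup>* b b' \<and> card b' = 1)"

definition Ncount :: "position \<Rightarrow> int \<Rightarrow> nat" where
  "Ncount b i = card {(a, c) \<in> b. (a - c) mod 3 = i}"

definition class_A :: "position \<Rightarrow> bool" where
  "class_A b \<longleftrightarrow> even (Ncount b 1 + Ncount b 2) \<and> odd (Ncount b 0 + Ncount b 2)
                 \<and> odd (Ncount b 0 + Ncount b 1)"

text \<open>Axial coordinates: (a,c) is a*e1 + c*e2 with e1, e2 unit vectors at 60 degrees,
  so the lattice directions are e1, e2, e1-e2.  Rotation by 180 degrees about the centre:\<close>
definition rot180 :: "hole \<Rightarrow> hole" where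
  "rot180 = (\<lambda>(a, c). (-a, -c))"

text \<open>The three diagonal reflections (mirror perpendicular to a lattice line):
  mirror along e1+e2 (perpendicular to e1-e2): swaps e1 and e2;
  mirror along 2e1-e2 (perpendicular to e2);
  mirror along e1-2e2 (perpendicular to e1).\<close>
definition diag_reflections :: "(hole \<Rightarrow> hole) set" where
  "diag_reflections = {\<lambda>(a, c). (c, a), \<lambda>(a, c). (a, -a - c), \<lambda>(a, c). (-a - c, c)}"

end

theory Submission
  imports Defs
begin

text \<open>Colour the holes by \<open>(a - c) mod 3\<close>.  The three holes involved in a jump carry the
  three different colours, so every jump changes each count \<open>N\<^sub>i\<close> by one and hence preserves
  the parities of \<open>N\<^sub>i + N\<^sub>j\<close>; in particular class A is invariant, and a single peg lies in
  class A iff it has colour 0.  The rotation by 180 degrees and the diagonal reflections exchange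
  the colours 1 and 2, so a symmetric position has \<open>N\<^sub>1 = N\<^sub>2\<close>.  Then \<open>N\<^sub>1 + N\<^sub>2\<close> is even,
  which forces the final peg to have colour 0.\<close>

definition colour :: "hole \<Rightarrow> int" where
  "colour p = (fst p - snd p) mod 3"

lemma colour_range: "colour p \<in> {0, 1, 2}"
  unfolding colour_def by auto

lemma Ncount_eq_card_colour: "Ncount b i = card {p \<in> b. colour p = i}"
  unfolding Ncount_def colour_def by (rule arg_cong[where f = card]) auto

lemma Ncount_singleton: "Ncount {x} i = (if colour x = i then 1 else 0)"
proof -
  have "{p \<in> {x}. colour p = i} = (if colour x = i then {x} else {})" by auto
  then show ?thesis unfolding Ncount_eq_card_colour by simp
qed

lemma colour_hadd: "colour (hadd p d) = (colour p + (fst d - snd d)) mod 3"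
  unfolding colour_def hadd_def mod_add_left_eq by (simp add: algebra_simps)

lemma colours_along_jump_distinct:
  assumes "d \<in> jump_dirs"
  shows "distinct [colour p, colour (hadd p d), colour (hadd (hadd p d) d)]"
proof -
  have "fst d - snd d \<in> {1, -1, 2, -2}" using assms unfolding jump_dirs_def by auto
  then show ?thesis using colour_range[of p] unfolding colour_hadd by auto
qed

lemma odd_card_filter_replace_two_by_one:
  fixes f :: "'a \<Rightarrow> 'b"
  assumes "finite B" "p \<in> B" "q \<in> B" "r \<notin> B"
    and "distinct [f p, f q, f r]" "i \<in> {f p, f q, f r}"
  shows "odd (card {x \<in> insert r (B - {p, q}). f x = i} + card {x \<in> B. f x = i})"
proof -
  let ?A = "{x \<in> B. f x = i}"
  have "finite ?A" using assms(1) by simp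
  consider "f r = i" | "f p = i" | "f q = i" using assms(6) by blast
  then show ?thesis
  proof cases
    case 1
    then have "{x \<in> insert r (B - {p, q}). f x = i} = insert r ?A" using assms(5) by auto
    then show ?thesis using \<open>finite ?A\<close> assms(4) by simp
  next
    case 2
    then have "{x \<in> insert r (B - {p, q}). f x = i} = ?A - {p}" using assms(5) by auto
    moreover have "p \<in> ?A" using 2 assms(2) by simp
    ultimately show ?thesis using \<open>finite ?A\<close> card_gt_0_iff by (fastforce simp: card_Diff_singleton)
  next
    case 3
    then have "{x \<in> insert r (B - {p, q}). f x = i} = ?A - {q}" using assms(5) by auto
    moreover have "q \<in> ?A" using 3 assms(3) by simp
    ultimately show ?thesis using \<open>finite ?A\<close> card_gt_0_iff by (fastforce simp: card_Diff_singleton)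
  qed
qed

lemma jump_finite: "jump b b' \<Longrightarrow> finite b \<Longrightarrow> finite b'"
  unfolding jump_def by auto

lemma jump_flips_Ncount_parity:
  assumes "jump b b'" "finite b" "i \<in> {0, 1, 2}"
  shows "odd (Ncount b' i + Ncount b i)"
proof -
  obtain d p where d: "d \<in> jump_dirs"
    and moved: "p \<in> b" "hadd p d \<in> b" "hadd (hadd p d) d \<notin> b"
    and b': "b' = insert (hadd (hadd p d) d) (b - {p, hadd p d})"
    using assms(1) unfolding jump_def by blast
  have "distinct [colour p, colour (hadd p d), colour (hadd (hadd p d) d)]"
    using colours_along_jump_distinct[OF d] .
  moreover from this have "i \<in> {colour p, colour (hadd p d), colour (hadd (hadd p d) d)}"
    using assms(3) colour_range[of p] colour_range[of "hadd p d"]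
      colour_range[of "hadd (hadd p d) d"] by auto
  ultimately show ?thesis
    unfolding Ncount_eq_card_colour b'
    by (rule odd_card_filter_replace_two_by_one[OF assms(2) moved])
qed

lemma rtranclp_jump_finite: "jump\<^sup>*\<^sup>* b b' \<Longrightarrow> finite b \<Longrightarrow> finite b'"
  by (induction rule: rtranclp_induct) (auto intro: jump_finite)

lemma rtranclp_jump_Ncount_sum_parity:
  assumes "jump\<^sup>*\<^sup>* b b'" "finite b" "i \<in> {0, 1, 2}" "j \<in> {0, 1, 2}"
  shows "even (Ncount b' i + Ncount b' j) \<longleftrightarrow> even (Ncount b i + Ncount b j)"
  using assms(1)
proof (induction rule: rtranclp_induct)
  case (step c c')
  have "finite c" using rtranclp_jump_finite[OF step.hyps(1) assms(2)] .
  then show ?case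
    using step jump_flips_Ncount_parity[OF step.hyps(2) _ assms(3)]
      jump_flips_Ncount_parity[OF step.hyps(2) _ assms(4)] by auto
qed simp

lemma rtranclp_jump_class_A:
  assumes "jump\<^sup>*\<^sup>* b b'" "finite b"
  shows "class_A b' \<longleftrightarrow> class_A b"
  using rtranclp_jump_Ncount_sum_parity[OF assms, of 1 2]
    rtranclp_jump_Ncount_sum_parity[OF assms, of 0 2]
    rtranclp_jump_Ncount_sum_parity[OF assms, of 0 1]
  unfolding class_A_def by simp

lemma class_A_singleton: "class_A {x} \<longleftrightarrow> colour x = 0"
  using colour_range[of x] unfolding class_A_def Ncount_singleton by auto

lemma Ncount_1_eq_Ncount_2_if_colour_negating:
  assumes "inj_on \<sigma> b" "\<sigma> ` b = b" "\<And>p. colour (\<sigma> p) = - colour p mod 3"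
  shows "Ncount b 1 = Ncount b 2"
proof -
  have swap: "colour (\<sigma> p) = 2 \<longleftrightarrow> colour p = 1" for p
    using assms(3)[of p] colour_range[of p] by auto
  have "\<sigma> ` {p \<in> b. colour p = 1} = {p \<in> b. colour p = 2}"
  proof
    show "\<sigma> ` {p \<in> b. colour p = 1} \<subseteq> {p \<in> b. colour p = 2}"
      using assms(2) swap by auto
    show "{p \<in> b. colour p = 2} \<subseteq> \<sigma> ` {p \<in> b. colour p = 1}"
    proof
      fix y assume y: "y \<in> {p \<in> b. colour p = 2}"
      then obtain x where "x \<in> b" "y = \<sigma> x" using assms(2) by blast
      then show "y \<in> \<sigma> ` {p \<in> b. colour p = 1}" using y swap by auto
    qed
  qed
  then show ?thesis
    unfolding Ncount_eq_card_colour
    by (metis (no_types, lifting) assms(1) card_image inj_on_subset mem_Collect_eq subsetI)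
qed

lemma colour_rot180: "colour (rot180 p) = - colour p mod 3"
  by (cases p) (simp add: rot180_def colour_def; presburger)

lemma inj_rot180: "inj rot180"
  by (rule injI) (auto simp: rot180_def split: prod.splits)

lemma colour_diag_reflection:
  "\<sigma> \<in> diag_reflections \<Longrightarrow> colour (\<sigma> p) = - colour p mod 3"
  unfolding diag_reflections_def colour_def by (cases p) (auto simp: mod_simps; presburger)

lemma inj_diag_reflection: "\<sigma> \<in> diag_reflections \<Longrightarrow> inj \<sigma>"
  by (auto simp: diag_reflections_def inj_def)

lemma finite_HX: "finite HX"
proof (rule finite_subset)
  show "HX \<subseteq> {-3..3} \<times> {-3..3}" unfolding HX_def by auto
qed simp

theorem theorem3:
  fixes b :: position
  assumes "b \<subseteq> HX"
    and "solvable b"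
    and "rot180 ` b = b \<or> (\<exists>\<sigma>\<in>diag_reflections. \<sigma> ` b = b)"
  shows "class_A b"
proof -
  have fin: "finite b" using assms(1) finite_HX finite_subset by blast
  have "Ncount b 1 = Ncount b 2"
    using assms(3) inj_rot180 colour_rot180 inj_diag_reflection colour_diag_reflection
    by (metis Ncount_1_eq_Ncount_2_if_colour_negating inj_on_subset subset_UNIV)
  moreover obtain x where x: "jump\<^sup>*\<^sup>* b {x}"
    using assms(2) unfolding solvable_def by (metis card_1_singletonE)
  ultimately have "even (Ncount {x} 1 + Ncount {x} 2)"
    using rtranclp_jump_Ncount_sum_parity[OF x fin, of 1 2] by simp
  then have "colour x = 0"
    using colour_range[of x] unfolding Ncount_singleton by (auto split: if_splits)
  then show ?thesis
    using rtranclp_jump_class_A[OF x fin] class_A_singleton by simp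
qed

end
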